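(* Let $T$ be a completely non-unitary contraction on a Hilbert space $\mathcal{H}$ with finite-dimensional defect spaces such that $\mathcal{D}_T\subseteq\mathcal{D}_{T^*}$ and $\dim\mathcal{D}_T=1$. Then $T$ is hyponormal.
   Context: For a contraction $T$ on $\mathcal{H}$, the defect spaces are $\mathcal{D}_T=\overline{(I-T^*T)^{1/2}\mathcal{H}}$ and $\mathcal{D}_{T^*}=\overline{(I-TT^* )^{1/2}\mathcal{H}}$. A contraction is completely non-unitary if it has no nonzero reducing subspace on which it is unitary. $T$ is hyponormal if $T^*T\ge TT^*$. *)

theory Defs
  imports "HOL-Analysis.Analysis"
begin

class complex_vector = real_vector +
  fixes scaleC :: "complex \<Rightarrow> 'a \<Rightarrow> 'a" (infixr "*\<^sub>C" 75)
  assumes scaleC_add_right: "scaleC a (x + y) = scaleC a x + scaleC a y"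
    and scaleC_add_left: "scaleC (a + b) x = scaleC a x + scaleC b x"
    and scaleC_scaleC: "scaleC a (scaleC b x) = scaleC (a * b) x"
    and scaleC_one: "scaleC 1 x = x"
    and scaleR_scaleC: "scaleR r x = scaleC (complex_of_real r) x"

text \<open>Inner product, linear in the second and conjugate-linear in the first argument.\<close>
class complex_inner = complex_vector + real_normed_vector +
  fixes cinner :: "'a \<Rightarrow> 'a \<Rightarrow> complex"
  assumes cinner_commute: "cinner x y = cnj (cinner y x)"
    and cinner_add_left: "cinner (x + y) z = cinner x z + cinner y z"
    and cinner_scaleC_left: "cinner (scaleC c x) y = cnj c * cinner x y"
    and cinner_nonneg: "Im (cinner x x) = 0 \<and> Re (cinner x x) \<ge> 0"
    and cinner_eq_zero_iff: "cinner x x = 0 \<longleftrightarrow> x = 0"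
    and norm_eq_sqrt_cinner: "norm x = sqrt (Re (cinner x x))"

class chilbert_space = complex_inner + complete_space

definition bounded_clinear :: "('a::complex_inner \<Rightarrow> 'b::complex_inner) \<Rightarrow> bool" where
  "bounded_clinear f \<longleftrightarrow> bounded_linear f \<and> (\<forall>c x. f (c *\<^sub>C x) = c *\<^sub>C f x)"

definition adj :: "('a::complex_inner \<Rightarrow> 'a) \<Rightarrow> ('a \<Rightarrow> 'a)" where
  "adj T = (THE S. \<forall>x y. cinner (S x) y = cinner x (T y))"

definition contraction :: "('a::complex_inner \<Rightarrow> 'a) \<Rightarrow> bool" where
  "contraction T \<longleftrightarrow> bounded_clinear T \<and> (\<forall>x. norm (T x) \<le> norm x)"

definition positive_op :: "('a::complex_inner \<Rightarrow> 'a) \<Rightarrow> bool" where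
  "positive_op A \<longleftrightarrow> bounded_clinear A \<and>
     (\<forall>x. Im (cinner x (A x)) = 0 \<and> Re (cinner x (A x)) \<ge> 0)"

definition op_le :: "('a::complex_inner \<Rightarrow> 'a) \<Rightarrow> ('a \<Rightarrow> 'a) \<Rightarrow> bool" where
  "op_le A B \<longleftrightarrow> positive_op (\<lambda>x. B x - A x)"

definition op_sqrt :: "('a::complex_inner \<Rightarrow> 'a) \<Rightarrow> ('a \<Rightarrow> 'a)" where
  "op_sqrt A = (THE S. positive_op S \<and> S \<circ> S = A)"

definition defect_space :: "('a::complex_inner \<Rightarrow> 'a) \<Rightarrow> 'a set" where
  "defect_space T = closure (range (op_sqrt (\<lambda>x. x - adj T (T x))))"

definition defect_space_adj :: "('a::complex_inner \<Rightarrow> 'a) \<Rightarrow> 'a set" where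
  "defect_space_adj T = closure (range (op_sqrt (\<lambda>x. x - T (adj T x))))"

definition csubspace :: "'a::complex_vector set \<Rightarrow> bool" where
  "csubspace M \<longleftrightarrow> 0 \<in> M \<and> (\<forall>x\<in>M. \<forall>y\<in>M. x + y \<in> M) \<and> (\<forall>c. \<forall>x\<in>M. c *\<^sub>C x \<in> M)"

definition cspan :: "'a::complex_vector set \<Rightarrow> 'a set" where
  "cspan B = {x. \<exists>F c. finite F \<and> F \<subseteq> B \<and> x = (\<Sum>b\<in>F. c b *\<^sub>C b)}"

definition cfinite_dim :: "'a::complex_vector set \<Rightarrow> bool" where
  "cfinite_dim S \<longleftrightarrow> (\<exists>B. finite B \<and> S \<subseteq> cspan B)"

definition cdim :: "'a::complex_vector set \<Rightarrow> nat" where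
  "cdim S = (LEAST n. \<exists>B. finite B \<and> card B = n \<and> B \<subseteq> S \<and> cspan B = S)"

definition reducing :: "('a::complex_inner \<Rightarrow> 'a) \<Rightarrow> 'a set \<Rightarrow> bool" where
  "reducing T M \<longleftrightarrow> csubspace M \<and> closed M \<and> T ` M \<subseteq> M \<and> adj T ` M \<subseteq> M"

definition unitary_on :: "('a::complex_inner \<Rightarrow> 'a) \<Rightarrow> 'a set \<Rightarrow> bool" where
  "unitary_on T M \<longleftrightarrow> (\<forall>x\<in>M. norm (T x) = norm x) \<and> T ` M = M"

definition completely_non_unitary :: "('a::complex_inner \<Rightarrow> 'a) \<Rightarrow> bool" where
  "completely_non_unitary T \<longleftrightarrow> (\<forall>M. reducing T M \<and> unitary_on T M \<longrightarrow> M = {0})"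

definition hyponormal :: "('a::complex_inner \<Rightarrow> 'a) \<Rightarrow> bool" where
  "hyponormal T \<longleftrightarrow> op_le (\<lambda>x. T (adj T x)) (\<lambda>x. adj T (T x))"

end

(*
  Write D = I - T^* T and D' = I - T T^*. Hyponormality, T^* T >= T T^*, says D <= D'.
  Since the defect space of T is a line spanned by a unit vector u, the positive operator D
  has rank one: D = a u (x) u with a >= 0. The inclusion of defect spaces puts u in the
  closure of the range of D'^(1/2), i.e. orthogonal to ker D'. From T D = D' T one gets
  D' (T u) = a T u and D'^2 = D' - a (T u) (x) (T u); splitting x into a part in ker D' and
  the rest then yields a |<u, x>|^2 <= <D' x, x>, which is D <= D'.

  Adjoints and square roots are defined by definite description, so both have to be
  constructed: adjoints from the Riesz representation, and the square root of I - B for a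
  positive contraction B as I - Y with Y = lim Y_n, Y_0 = 0, Y_(n+1) = (B + Y_n^2) / 2.
*)

theory Submission
  imports Defs
begin

section \<open>Complex inner product spaces\<close>

interpretation cvs: vector_space "scaleC :: complex \<Rightarrow> 'a::complex_vector \<Rightarrow> 'a"
  by unfold_locales (simp_all add: scaleC_add_right scaleC_add_left scaleC_scaleC scaleC_one)

lemma cinner_zero_left [simp]: "cinner 0 (y::'a::complex_inner) = 0"
  using cinner_add_left[of 0 0 y] by simp

lemma cinner_zero_right [simp]: "cinner (y::'a::complex_inner) 0 = 0"
  by (metis cinner_commute cinner_zero_left complex_cnj_zero)

lemma cinner_add_right: "cinner (x::'a::complex_inner) (y + z) = cinner x y + cinner x z"
  by (metis cinner_add_left cinner_commute complex_cnj_add)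

lemma cinner_scaleC_right: "cinner (x::'a::complex_inner) (c *\<^sub>C y) = c * cinner x y"
  by (metis cinner_commute cinner_scaleC_left complex_cnj_cnj complex_cnj_mult)

lemma cinner_minus_left: "cinner (- x) (y::'a::complex_inner) = - cinner x y"
  by (metis add.right_inverse add_eq_0_iff cinner_add_left cinner_zero_left)

lemma cinner_minus_right: "cinner (y::'a::complex_inner) (- x) = - cinner y x"
  by (metis add.right_inverse add_eq_0_iff cinner_add_right cinner_zero_right)

lemma cinner_diff_left: "cinner (x - z) (y::'a::complex_inner) = cinner x y - cinner z y"
  using cinner_add_left[of x "-z" y] cinner_minus_left[of z y] by simp

lemma cinner_diff_right: "cinner (y::'a::complex_inner) (x - z) = cinner y x - cinner y z"
  using cinner_add_right[of y x "-z"] cinner_minus_right[of y z] by simp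

lemma cinner_scaleR_left: "cinner (r *\<^sub>R x) (y::'a::complex_inner) = of_real r * cinner x y"
  by (simp add: scaleR_scaleC cinner_scaleC_left)

lemma cinner_scaleR_right: "cinner (y::'a::complex_inner) (r *\<^sub>R x) = of_real r * cinner y x"
  by (simp add: scaleR_scaleC cinner_scaleC_right)

lemmas cinner_simps = cinner_add_left cinner_add_right cinner_diff_left cinner_diff_right
  cinner_minus_left cinner_minus_right cinner_scaleC_left cinner_scaleC_right
  cinner_scaleR_left cinner_scaleR_right

lemma cinner_self: "cinner (x::'a::complex_inner) x = of_real ((norm x)\<^sup>2)"
proof -
  have "Im (cinner x x) = 0" "Re (cinner x x) \<ge> 0"
    using cinner_nonneg by auto
  moreover have "(norm x)\<^sup>2 = Re (cinner x x)"
    using norm_eq_sqrt_cinner[of x] \<open>Re (cinner x x) \<ge> 0\<close> by simp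
  ultimately show ?thesis by (simp add: complex_eq_iff)
qed

lemma Re_cinner_self: "Re (cinner (x::'a::complex_inner) x) = (norm x)\<^sup>2"
  by (simp add: cinner_self)

lemma mult_cnj_self: "c * cnj c = of_real ((cmod c)\<^sup>2)"
  using complex_norm_square[of c] by simp

lemma norm_scaleC: "norm (c *\<^sub>C (x::'a::complex_inner)) = cmod c * norm x"
proof -
  have "(norm (c *\<^sub>C x))\<^sup>2 = Re (cnj c * c * cinner x x)"
    by (simp only: Re_cinner_self[symmetric] cinner_scaleC_left cinner_scaleC_right mult.assoc mult.left_commute)
  also have "cnj c * c * cinner x x = of_real ((cmod c)\<^sup>2 * (norm x)\<^sup>2)"
    by (simp add: cinner_self mult_cnj_self mult.commute[of "cnj c"])
  finally have "(norm (c *\<^sub>C x))\<^sup>2 = (cmod c * norm x)\<^sup>2"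
    by (simp only: Re_complex_of_real power_mult_distrib)
  then show ?thesis by (simp add: power2_eq_iff_nonneg)
qed

lemma cinner_ext:
  assumes "\<And>y. cinner a y = cinner b (y::'a::complex_inner)"
  shows "a = b"
proof -
  have "cinner (a - b) (a - b) = 0"
    using assms[of "a - b"] by (simp add: cinner_diff_left)
  then show ?thesis using cinner_eq_zero_iff[of "a - b"] by simp
qed

lemma norm_add_square:
  "(norm (x + y))\<^sup>2 = (norm x)\<^sup>2 + (norm y)\<^sup>2 + 2 * Re (cinner x (y::'a::complex_inner))"
proof -
  have "Re (cinner y x) = Re (cinner x y)" by (subst cinner_commute) simp
  then show ?thesis by (simp add: Re_cinner_self[symmetric] cinner_add_left cinner_add_right)
qed

lemma norm_diff_square:
  "(norm (x - y))\<^sup>2 = (norm x)\<^sup>2 + (norm y)\<^sup>2 - 2 * Re (cinner x (y::'a::complex_inner))"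
proof -
  have "Re (cinner y x) = Re (cinner x y)" by (subst cinner_commute) simp
  then show ?thesis by (simp add: Re_cinner_self[symmetric] cinner_diff_left cinner_diff_right)
qed

lemma le_mult_if_quadratic_nonneg:
  fixes a b k :: real
  assumes "k \<ge> 0" "b \<ge> 0" and nonneg: "\<And>r. 0 \<le> a - 2 * r * k + r\<^sup>2 * k * b"
  shows "k \<le> a * b"
proof (cases "b = 0")
  case True
  have "0 \<le> a - 2 * ((a + 1) / (2 * k)) * k" if "k > 0"
    using nonneg[of "(a + 1) / (2 * k)"] True by simp
  then show ?thesis using nonneg[of 0] \<open>k \<ge> 0\<close> True by (cases "k = 0") auto
next
  case False
  then have "b > 0" using \<open>b \<ge> 0\<close> by simp
  have "0 \<le> a - 2 * (1 / b) * k + (1 / b)\<^sup>2 * k * b" by (rule nonneg)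
  also have "\<dots> = a - k / b" using \<open>b > 0\<close> by (simp add: field_simps power2_eq_square)
  finally show ?thesis using \<open>b > 0\<close> by (simp add: field_simps mult.commute)
qed

section \<open>Bounded complex-linear and positive operators\<close>

lemma clinear_add: "bounded_clinear T \<Longrightarrow> T (x + y) = T x + T y"
  by (simp add: bounded_clinear_def linear_add bounded_linear.linear)

lemma clinear_diff: "bounded_clinear T \<Longrightarrow> T (x - y) = T x - T y"
  by (simp add: bounded_clinear_def linear_diff bounded_linear.linear)

lemma clinear_zero: "bounded_clinear T \<Longrightarrow> T 0 = 0"
  by (simp add: bounded_clinear_def linear_0 bounded_linear.linear)

lemma clinear_scaleR: "bounded_clinear T \<Longrightarrow> T (r *\<^sub>R x) = r *\<^sub>R T x"
  by (simp add: bounded_clinear_def linear_scale bounded_linear.linear)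

lemma clinear_scaleC: "bounded_clinear T \<Longrightarrow> T (c *\<^sub>C x) = c *\<^sub>C T x"
  by (simp add: bounded_clinear_def)

lemma bounded_clinearI:
  assumes "\<And>x y. f (x + y) = f x + f y" "\<And>c x. f (c *\<^sub>C x) = c *\<^sub>C f x"
    and "\<And>x. norm (f x) \<le> norm x * K"
  shows "bounded_clinear f"
  unfolding bounded_clinear_def
  using assms by (auto intro!: bounded_linear_intro[where K=K] simp: scaleR_scaleC)

lemma bounded_clinear_compose:
  "bounded_clinear S \<Longrightarrow> bounded_clinear T \<Longrightarrow> bounded_clinear (\<lambda>x. S (T x))"
  by (simp add: bounded_clinear_def bounded_linear_compose)

lemma bounded_clinear_ident: "bounded_clinear (\<lambda>x. x)"
  by (simp add: bounded_clinear_def bounded_linear_ident)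

lemma bounded_clinear_zero: "bounded_clinear (\<lambda>x. 0)"
  by (simp add: bounded_clinear_def bounded_linear_zero cvs.scale_zero_right)

lemma bounded_clinear_diff:
  "bounded_clinear S \<Longrightarrow> bounded_clinear T \<Longrightarrow> bounded_clinear (\<lambda>x. S x - T x)"
  by (simp add: bounded_clinear_def bounded_linear_sub cvs.scale_right_diff_distrib)

lemma bounded_clinear_add:
  "bounded_clinear S \<Longrightarrow> bounded_clinear T \<Longrightarrow> bounded_clinear (\<lambda>x. S x + T x)"
  by (simp add: bounded_clinear_def bounded_linear_add scaleC_add_right)

lemma bounded_clinear_const_scaleR:
  assumes "bounded_clinear S"
  shows "bounded_clinear (\<lambda>x. r *\<^sub>R S x)"
  using assms bounded_linear_const_scaleR[of S r]
  by (simp add: bounded_clinear_def scaleR_scaleC mult.commute)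

lemma Im_cinner_self_adjoint:
  assumes "\<And>x y. cinner x (S y) = cinner (S x) y"
  shows "Im (cinner x (S (x::'a::complex_inner))) = 0"
proof -
  have "cinner x (S x) = cnj (cinner x (S x))"
    using assms cinner_commute by metis
  then show ?thesis by (metis Im_complex_of_real Reals_cnj_iff complex_is_Real_iff)
qed

lemma positive_opI:
  assumes "bounded_clinear S" "\<And>x y. cinner x (S y) = cinner (S x) y"
    and "\<And>x. Re (cinner x (S x)) \<ge> 0"
  shows "positive_op S"
  using assms Im_cinner_self_adjoint[of S] unfolding positive_op_def by blast

lemma positive_op_ident: "positive_op (\<lambda>x::'a::complex_inner. x)"
  by (rule positive_opI) (simp_all add: bounded_clinear_ident Re_cinner_self)

text \<open>By polarization; this needs complex scalars.\<close>

lemma positive_op_self_adjoint: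
  fixes S :: "'a::complex_inner \<Rightarrow> 'a"
  assumes "positive_op S"
  shows "cinner x (S y) = cinner (S x) y"
proof -
  have S: "bounded_clinear S" and real: "\<And>z. Im (cinner z (S z)) = 0"
    using assms by (auto simp: positive_op_def)
  define \<alpha> where "\<alpha> = cinner x (S y)"
  define \<beta> where "\<beta> = cinner y (S x)"
  have "cinner (x + y) (S (x + y)) = cinner x (S x) + cinner y (S y) + \<alpha> + \<beta>"
    unfolding \<alpha>_def \<beta>_def clinear_add[OF S] by (simp add: cinner_add_left cinner_add_right)
  then have "Im \<alpha> + Im \<beta> = 0"
    using real[of "x + y"] real[of x] real[of y] by simp
  moreover have "cinner (x + \<i> *\<^sub>C y) (S (x + \<i> *\<^sub>C y))
      = cinner x (S x) + cinner y (S y) + \<i> * \<alpha> - \<i> * \<beta>"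
    unfolding \<alpha>_def \<beta>_def clinear_add[OF S] clinear_scaleC[OF S]
    by (simp add: cinner_simps algebra_simps)
  then have "Re \<alpha> - Re \<beta> = 0"
    using real[of "x + \<i> *\<^sub>C y"] real[of x] real[of y] by simp
  moreover have "cinner (S x) y = cnj \<beta>"
    unfolding \<beta>_def by (rule cinner_commute)
  ultimately show ?thesis unfolding \<alpha>_def[symmetric] by (simp add: complex_eq_iff)
qed

text \<open>With \<open>s = r \<langle>x, B y\<rangle>\<^sup>*\<close> the form is a real quadratic in \<open>r\<close>, which gives
  Cauchy-Schwarz below.\<close>

lemma positive_op_form_along_line:
  fixes B :: "'a::complex_inner \<Rightarrow> 'a"
  assumes "positive_op B" and s: "s = of_real r * cnj (cinner x (B y))"
  shows "Re (cinner (x - s *\<^sub>C y) (B (x - s *\<^sub>C y)))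
    = Re (cinner x (B x)) - 2 * r * (cmod (cinner x (B y)))\<^sup>2
      + r\<^sup>2 * (cmod (cinner x (B y)))\<^sup>2 * Re (cinner y (B y))"
proof -
  define c where "c = cinner x (B y)"
  have B: "bounded_clinear B" using assms by (simp add: positive_op_def)
  have "cinner y (B x) = cnj c"
    unfolding c_def by (metis cinner_commute positive_op_self_adjoint[OF assms(1)])
  then have "cinner (x - s *\<^sub>C y) (B (x - s *\<^sub>C y))
      = cinner x (B x) - s * c - cnj s * cnj c + cnj s * s * cinner y (B y)"
    by (simp add: clinear_diff[OF B] clinear_scaleC[OF B] cinner_simps c_def algebra_simps)
  also have "s * c = of_real (r * (cmod c)\<^sup>2)"
    using mult_cnj_self[of c] by (simp add: s c_def[symmetric] mult.commute mult.left_commute)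
  also have "cnj s * cnj c = of_real (r * (cmod c)\<^sup>2)"
    using mult_cnj_self[of c] by (simp add: s c_def[symmetric] mult.assoc)
  also have "cnj s * s = of_real (r\<^sup>2 * (cmod c)\<^sup>2)"
    using mult_cnj_self[of c]
    by (simp add: s c_def[symmetric] mult.commute mult.left_commute power2_eq_square)
  finally show ?thesis unfolding c_def by simp
qed

lemma positive_op_cauchy_schwarz:
  fixes B :: "'a::complex_inner \<Rightarrow> 'a"
  assumes "positive_op B"
  shows "(cmod (cinner x (B y)))\<^sup>2 \<le> Re (cinner x (B x)) * Re (cinner y (B y))"
proof -
  have pos: "Re (cinner z (B z)) \<ge> 0" for z
    using assms by (simp add: positive_op_def)
  have "0 \<le> Re (cinner x (B x)) - 2 * r * (cmod (cinner x (B y)))\<^sup>2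
      + r\<^sup>2 * (cmod (cinner x (B y)))\<^sup>2 * Re (cinner y (B y))" for r
    using pos positive_op_form_along_line[OF assms refl] by metis
  from le_mult_if_quadratic_nonneg[OF _ pos this] show ?thesis by simp
qed

lemma cmod_cinner_le: "cmod (cinner x y) \<le> norm x * norm (y::'a::complex_inner)"
proof -
  have "(cmod (cinner x y))\<^sup>2 \<le> (norm x * norm y)\<^sup>2"
    using positive_op_cauchy_schwarz[OF positive_op_ident, of x y]
    by (simp add: Re_cinner_self power_mult_distrib)
  then show ?thesis by (rule power2_le_imp_le) simp
qed

lemma Re_cinner_le_if_contractive:
  assumes "norm (A x) \<le> norm x"
  shows "Re (cinner x (A x)) \<le> (norm (x::'a::complex_inner))\<^sup>2"
proof -
  have "Re (cinner x (A x)) \<le> norm x * norm (A x)"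
    using complex_Re_le_cmod cmod_cinner_le order_trans by blast
  also have "\<dots> \<le> (norm x)\<^sup>2"
    using assms by (simp add: power2_eq_square mult_left_mono)
  finally show ?thesis .
qed

lemma positive_op_apply_eq_0:
  fixes S :: "'a::complex_inner \<Rightarrow> 'a"
  assumes "positive_op S" and "Re (cinner y (S y)) = 0"
  shows "S y = 0"
proof -
  have "(cmod (cinner (S y) (S y)))\<^sup>2 \<le> Re (cinner (S y) (S (S y))) * Re (cinner y (S y))"
    by (rule positive_op_cauchy_schwarz[OF assms(1)])
  then have "cinner (S y) (S y) = 0" using assms(2) by simp
  then show ?thesis using cinner_eq_zero_iff by blast
qed

lemma bounded_linear_cinner_left: "bounded_linear (\<lambda>x. cinner x (y::'a::complex_inner))"
  by (rule bounded_linear_intro[where K="norm y"])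
    (simp_all add: cinner_simps scaleR_conv_of_real cmod_cinner_le)

lemma bounded_linear_cinner_right: "bounded_linear (\<lambda>x. cinner (y::'a::complex_inner) x)"
  using cmod_cinner_le[of y]
  by (intro bounded_linear_intro[where K="norm y"]) (simp_all add: cinner_simps scaleR_conv_of_real mult.commute)

lemma bounded_linear_scaleC: "bounded_linear (\<lambda>x. c *\<^sub>C (x::'a::complex_inner))"
  by (rule bounded_linear_intro[where K="cmod c"])
    (simp_all add: scaleC_add_right scaleR_scaleC scaleC_scaleC mult.commute norm_scaleC)

section \<open>Riesz representation and adjoints\<close>

lemma Cauchy_minimizing_sequence:
  fixes C :: "'a::complex_inner set"
  assumes midpoint: "\<And>x y. x \<in> C \<Longrightarrow> y \<in> C \<Longrightarrow> (1/2::real) *\<^sub>R (x + y) \<in> C"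
    and lower: "\<And>x. x \<in> C \<Longrightarrow> d \<le> norm x" and "d \<ge> 0"
    and xs: "\<And>n. xs n \<in> C" "\<And>n. (norm (xs n))\<^sup>2 < d\<^sup>2 + 1 / Suc n"
  shows "Cauchy xs"
proof (rule metric_CauchyI)
  have dist_bound: "(norm (xs m - xs n))\<^sup>2 \<le> 2 / Suc m + 2 / Suc n" for m n
  proof -
    have "d \<le> norm ((1/2::real) *\<^sub>R (xs m + xs n))"
      using midpoint xs(1) lower by blast
    then have "(2 * d)\<^sup>2 \<le> (norm (xs m + xs n))\<^sup>2"
      using \<open>d \<ge> 0\<close> by (intro power_mono) auto
    moreover have "(norm (xs m - xs n))\<^sup>2
        = 2 * (norm (xs m))\<^sup>2 + 2 * (norm (xs n))\<^sup>2 - (norm (xs m + xs n))\<^sup>2"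
      by (simp add: norm_add_square norm_diff_square)
    ultimately show ?thesis
      using xs(2)[of m] xs(2)[of n] by (simp add: power_mult_distrib)
  qed
  fix e :: real
  assume "e > 0"
  obtain M where M: "inverse (real (Suc M)) < e\<^sup>2 / 4"
    using reals_Archimedean[of "e\<^sup>2 / 4"] \<open>e > 0\<close> by auto
  have "dist (xs m) (xs n) < e" if "M \<le> m" "M \<le> n" for m n
  proof -
    have "2 / Suc m \<le> 2 / Suc M" "2 / Suc n \<le> 2 / Suc M"
      using that by (auto intro!: divide_left_mono)
    then have "(norm (xs m - xs n))\<^sup>2 < e\<^sup>2"
      using dist_bound[of m n] M by (simp add: inverse_eq_divide)
    then show ?thesis using \<open>e > 0\<close> by (simp add: dist_norm power_less_imp_less_base)
  qed
  then show "\<exists>M. \<forall>m\<ge>M. \<forall>n\<ge>M. dist (xs m) (xs n) < e" by blast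
qed

lemma minimizing_norm_sequence_exists:
  fixes H :: "'a::real_normed_vector set"
  assumes "H \<noteq> {}"
  obtains xs where "\<And>n. xs n \<in> H" "\<And>n. (norm (xs n))\<^sup>2 < (Inf (norm ` H))\<^sup>2 + 1 / Suc n"
proof -
  define d where "d = Inf (norm ` H)"
  have "d \<ge> 0"
    unfolding d_def using assms by (intro cInf_greatest) auto
  have "\<exists>x\<in>H. (norm x)\<^sup>2 < d\<^sup>2 + 1 / Suc n" for n
  proof -
    have "d < sqrt (d\<^sup>2 + 1 / Suc n)"
      using \<open>d \<ge> 0\<close> by (intro real_less_rsqrt) simp
    then obtain x where "x \<in> H" "norm x < sqrt (d\<^sup>2 + 1 / Suc n)"
      using cInf_lessD[of "norm ` H"] assms unfolding d_def by blast
    moreover have "(norm x)\<^sup>2 < (sqrt (d\<^sup>2 + 1 / Suc n))\<^sup>2"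
      using \<open>norm x < sqrt (d\<^sup>2 + 1 / Suc n)\<close> by (intro power_strict_mono) auto
    ultimately show ?thesis by auto
  qed
  then show ?thesis
    using that unfolding d_def by metis
qed

lemma hyperplane_min_norm_exists:
  fixes f :: "'a::chilbert_space \<Rightarrow> complex"
  assumes f: "bounded_linear f" and "f w0 = 1"
  obtains z where "f z = 1" "\<And>w. f w = 1 \<Longrightarrow> norm z \<le> norm w"
proof -
  define H where "H = {x. f x = 1}"
  define d where "d = Inf (norm ` H)"
  have d_le: "d \<le> norm x" if "x \<in> H" for x
    unfolding d_def using that by (intro cInf_lower bdd_belowI[of _ 0]) auto
  have "d \<ge> 0"
    unfolding d_def using \<open>f w0 = 1\<close> by (intro cInf_greatest) (auto simp: H_def)
  obtain xs where xs: "\<And>n. xs n \<in> H" "\<And>n. (norm (xs n))\<^sup>2 < d\<^sup>2 + 1 / Suc n"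
    using minimizing_norm_sequence_exists[of H] \<open>f w0 = 1\<close> unfolding d_def H_def by blast
  have "Cauchy xs"
  proof (rule Cauchy_minimizing_sequence[OF _ d_le \<open>d \<ge> 0\<close> xs])
    show "(1/2::real) *\<^sub>R (x + y) \<in> H" if "x \<in> H" "y \<in> H" for x y
      using that linear_add[OF bounded_linear.linear[OF f]] linear_scale[OF bounded_linear.linear[OF f]]
      by (simp add: H_def scaleR_conv_of_real)
  qed
  then obtain z where z: "xs \<longlonglongrightarrow> z"
    using Cauchy_convergent_iff convergent_def by blast
  have "(\<lambda>n. f (xs n)) \<longlonglongrightarrow> f z"
    by (rule bounded_linear.tendsto[OF f z])
  then have "f z = 1"
    using xs(1) by (simp add: H_def LIMSEQ_const_iff)
  have "(norm z)\<^sup>2 \<le> d\<^sup>2"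
  proof (rule LIMSEQ_le)
    show "(\<lambda>n. (norm (xs n))\<^sup>2) \<longlonglongrightarrow> (norm z)\<^sup>2"
      using z by (intro tendsto_intros)
    show "(\<lambda>n. d\<^sup>2 + inverse (real (Suc n))) \<longlonglongrightarrow> d\<^sup>2"
      using tendsto_add[OF tendsto_const LIMSEQ_inverse_real_of_nat, of "d\<^sup>2"] by simp
    show "\<exists>N. \<forall>n\<ge>N. (norm (xs n))\<^sup>2 \<le> d\<^sup>2 + inverse (real (Suc n))"
      using xs(2) by (auto simp: inverse_eq_divide intro: less_imp_le)
  qed
  then have "norm z \<le> norm w" if "f w = 1" for w
    using \<open>d \<ge> 0\<close> d_le[of w] that power2_le_imp_le by (fastforce simp: H_def)
  with \<open>f z = 1\<close> show ?thesis by (rule that)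
qed

lemma hyperplane_min_norm_orthogonal:
  fixes f :: "'a::complex_inner \<Rightarrow> complex"
  assumes f: "bounded_linear f" and f_scaleC: "\<And>c x. f (c *\<^sub>C x) = c * f x"
    and "f z = 1" and z_min: "\<And>w. f w = 1 \<Longrightarrow> norm z \<le> norm w" and "f k = 0"
  shows "cinner z k = 0"
proof -
  have "0 \<le> 0 - 2 * r * (cmod (cinner z k))\<^sup>2 + r\<^sup>2 * (cmod (cinner z k))\<^sup>2 * (norm k)\<^sup>2" for r
  proof -
    define w where "w = z - (of_real r * cnj (cinner z k)) *\<^sub>C k"
    have "f w = 1"
      using \<open>f z = 1\<close> \<open>f k = 0\<close> linear_diff[OF bounded_linear.linear[OF f]]
      by (simp add: w_def f_scaleC)
    then have "(norm z)\<^sup>2 \<le> (norm w)\<^sup>2"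
      using z_min by (simp add: power_mono)
    also have "(norm w)\<^sup>2
        = (norm z)\<^sup>2 - 2 * r * (cmod (cinner z k))\<^sup>2 + r\<^sup>2 * (cmod (cinner z k))\<^sup>2 * (norm k)\<^sup>2"
      using positive_op_form_along_line[OF positive_op_ident, of _ r z k]
      by (simp add: w_def Re_cinner_self)
    finally show ?thesis by simp
  qed
  from le_mult_if_quadratic_nonneg[OF _ _ this] show ?thesis by simp
qed

lemma riesz_representation:
  fixes f :: "'a::chilbert_space \<Rightarrow> complex"
  assumes f: "bounded_linear f" and f_scaleC: "\<And>c x. f (c *\<^sub>C x) = c * f x"
  shows "\<exists>z. \<forall>y. f y = cinner z y"
proof (cases "\<forall>y. f y = 0")
  case True
  then show ?thesis by (intro exI[of _ 0]) simp
next
  case False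
  then obtain y0 where "f y0 \<noteq> 0" by auto
  then have "f ((1 / f y0) *\<^sub>C y0) = 1"
    by (simp add: f_scaleC)
  then obtain z where "f z = 1" and z_min: "\<And>w. f w = 1 \<Longrightarrow> norm z \<le> norm w"
    using hyperplane_min_norm_exists[OF f] by blast
  have "z \<noteq> 0"
    using \<open>f z = 1\<close> linear_0[OF bounded_linear.linear[OF f]] by auto
  show ?thesis
  proof (intro exI allI)
    fix y
    have "f (y - f y *\<^sub>C z) = 0"
      using \<open>f z = 1\<close> linear_diff[OF bounded_linear.linear[OF f]] by (simp add: f_scaleC)
    then have "cinner z (y - f y *\<^sub>C z) = 0"
      using hyperplane_min_norm_orthogonal[OF f f_scaleC \<open>f z = 1\<close> z_min] by blast
    then have "cinner z y = f y * of_real ((norm z)\<^sup>2)"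
      by (simp add: cinner_simps cinner_self)
    then show "f y = cinner ((1 / (norm z)\<^sup>2) *\<^sub>R z) y"
      using \<open>z \<noteq> 0\<close> by (simp add: cinner_scaleR_left field_simps)
  qed
qed

lemma cinner_adj_left:
  fixes T :: "'a::chilbert_space \<Rightarrow> 'a"
  assumes T: "bounded_clinear T"
  shows "cinner (adj T x) y = cinner x (T y)"
proof -
  have "\<exists>z. \<forall>y. cinner x (T y) = cinner z y" for x
  proof (rule riesz_representation)
    show "bounded_linear (\<lambda>y. cinner x (T y))"
      using T unfolding bounded_clinear_def
      by (blast intro: bounded_linear_compose[OF bounded_linear_cinner_right])
    show "cinner x (T (c *\<^sub>C y)) = c * cinner x (T y)" for c y
      by (simp add: clinear_scaleC[OF T] cinner_scaleC_right)
  qed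
  then obtain S where S: "\<forall>x y. cinner (S x) y = cinner x (T y)"
    by metis
  have "\<exists>!S. \<forall>x y. cinner (S x) y = cinner x (T y)"
  proof (rule ex1I[of _ S])
    show "\<forall>x y. cinner (S x) y = cinner x (T y)" by (fact S)
    show "S' = S" if "\<forall>x y. cinner (S' x) y = cinner x (T y)" for S'
      using that S by (intro ext cinner_ext) auto
  qed
  from theI'[OF this] show ?thesis unfolding adj_def by blast
qed

lemma cinner_adj_right:
  fixes T :: "'a::chilbert_space \<Rightarrow> 'a"
  assumes "bounded_clinear T"
  shows "cinner y (adj T x) = cinner (T y) x"
  by (metis cinner_adj_left[OF assms] cinner_commute)

lemma norm_adj_le:
  fixes T :: "'a::chilbert_space \<Rightarrow> 'a"
  assumes T: "bounded_clinear T" and K: "\<And>x. norm (T x) \<le> norm x * K" and "K \<ge> 0"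
  shows "norm (adj T x) \<le> norm x * K"
proof -
  have "(norm (adj T x))\<^sup>2 = Re (cinner x (T (adj T x)))"
    by (simp add: Re_cinner_self[symmetric] cinner_adj_left[OF T])
  also have "\<dots> \<le> norm x * norm (T (adj T x))"
    using complex_Re_le_cmod cmod_cinner_le order_trans by blast
  also have "\<dots> \<le> norm x * (norm (adj T x) * K)"
    by (intro mult_left_mono K) simp
  finally have "norm (adj T x) * norm (adj T x) \<le> norm (adj T x) * (norm x * K)"
    by (simp add: power2_eq_square ac_simps)
  then show ?thesis
    using \<open>K \<ge> 0\<close> by (cases "norm (adj T x) = 0") (auto simp: mult_le_cancel_left)
qed

lemma bounded_clinear_adj:
  fixes T :: "'a::chilbert_space \<Rightarrow> 'a"
  assumes T: "bounded_clinear T"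
  shows "bounded_clinear (adj T)"
proof -
  obtain K where "K \<ge> 0" "\<And>x. norm (T x) \<le> norm x * K"
    using T by (auto simp: bounded_clinear_def dest: bounded_linear.nonneg_bounded)
  show ?thesis
  proof (rule bounded_clinearI)
    show "adj T (x + y) = adj T x + adj T y" for x y
      by (rule cinner_ext) (simp add: cinner_adj_left[OF T] cinner_simps)
    show "adj T (c *\<^sub>C x) = c *\<^sub>C adj T x" for c x
      by (rule cinner_ext) (simp add: cinner_adj_left[OF T] cinner_simps)
    show "norm (adj T x) \<le> norm x * K" for x
      by (rule norm_adj_le[OF T]) fact+
  qed
qed

lemma positive_op_adj_comp:
  fixes T :: "'a::chilbert_space \<Rightarrow> 'a"
  assumes T: "bounded_clinear T"
  shows "positive_op (\<lambda>x. adj T (T x))"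
proof (rule positive_opI)
  show "bounded_clinear (\<lambda>x. adj T (T x))"
    by (rule bounded_clinear_compose[OF bounded_clinear_adj[OF T] T])
  show "cinner x (adj T (T y)) = cinner (adj T (T x)) y" for x y
    by (simp add: cinner_adj_left[OF T] cinner_adj_right[OF T])
  show "Re (cinner x (adj T (T x))) \<ge> 0" for x
    by (simp add: cinner_adj_right[OF T] Re_cinner_self)
qed

lemma positive_op_comp_adj:
  fixes T :: "'a::chilbert_space \<Rightarrow> 'a"
  assumes T: "bounded_clinear T"
  shows "positive_op (\<lambda>x. T (adj T x))"
proof (rule positive_opI)
  show "bounded_clinear (\<lambda>x. T (adj T x))"
    by (rule bounded_clinear_compose[OF T bounded_clinear_adj[OF T]])
  show "cinner x (T (adj T y)) = cinner (T (adj T x)) y" for x y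
    using cinner_adj_left[OF T, of x "adj T y"] cinner_adj_right[OF T, of "adj T x" y] by simp
  show "Re (cinner x (T (adj T x))) \<ge> 0" for x
    by (simp add: cinner_adj_left[OF T, symmetric] Re_cinner_self)
qed

section \<open>Square roots of positive operators\<close>

lemma positive_op_eq_if_squares_eq:
  fixes S S' :: "'a::complex_inner \<Rightarrow> 'a"
  assumes P: "positive_op S" and P': "positive_op S'"
    and comm: "\<And>x. S (S' x) = S' (S x)" and sq: "\<And>x. S (S x) = S' (S' x)"
  shows "S = S'"
proof
  fix x
  have S: "bounded_clinear S" and S': "bounded_clinear S'"
    using P P' by (auto simp: positive_op_def)
  define y where "y = S x - S' x"
  have "S y + S' y = 0"
    unfolding y_def clinear_diff[OF S] clinear_diff[OF S'] using comm[of x] sq[of x] by simp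
  then have "Re (cinner y (S y)) + Re (cinner y (S' y)) = 0"
    by (metis cinner_add_right cinner_zero_right plus_complex.sel(1) zero_complex.sel(1))
  moreover have "Re (cinner y (S y)) \<ge> 0" "Re (cinner y (S' y)) \<ge> 0"
    using P P' by (auto simp: positive_op_def)
  ultimately have "S y = 0" "S' y = 0"
    using positive_op_apply_eq_0[OF P] positive_op_apply_eq_0[OF P'] by auto
  then have "cinner y y = 0"
    using positive_op_self_adjoint[OF P, of y x] positive_op_self_adjoint[OF P', of y x]
    by (simp add: y_def cinner_diff_right)
  then have "y = 0" using cinner_eq_zero_iff by blast
  then show "S x = S' x" unfolding y_def by simp
qed

text \<open>Applied to \<open>C = Y\<^sub>m - Y\<^sub>n\<close>, this turns convergence of the quadratic forms of a
  monotone sequence into convergence of the vectors.\<close>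

lemma norm_positive_op_power4_le:
  fixes C :: "'a::complex_inner \<Rightarrow> 'a"
  assumes P: "positive_op C" and M: "\<And>z. norm (C z) \<le> M * norm z" and "M \<ge> 0"
  shows "(norm (C x))^4 \<le> M^3 * (norm x)\<^sup>2 * Re (cinner x (C x))"
proof -
  define w where "w = C x"
  have "cmod (cinner w (C x)) = (norm w)\<^sup>2"
    unfolding w_def by (simp only: cinner_self norm_of_real) simp
  then have "(norm w)^4 = (cmod (cinner w (C x)))\<^sup>2"
    by (simp add: power_mult[symmetric])
  also have "\<dots> \<le> Re (cinner w (C w)) * Re (cinner x (C x))"
    by (rule positive_op_cauchy_schwarz[OF P])
  also have "\<dots> \<le> (M * (norm w)\<^sup>2) * Re (cinner x (C x))"
  proof (rule mult_right_mono)
    have "Re (cinner w (C w)) \<le> norm w * norm (C w)"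
      using complex_Re_le_cmod cmod_cinner_le order_trans by blast
    also have "\<dots> \<le> M * (norm w)\<^sup>2"
      using mult_left_mono[OF M[of w] norm_ge_zero[of w]] by (simp add: power2_eq_square ac_simps)
    finally show "Re (cinner w (C w)) \<le> M * (norm w)\<^sup>2" .
    show "0 \<le> Re (cinner x (C x))" using P by (simp add: positive_op_def)
  qed
  also have "\<dots> \<le> (M * (M * norm x)\<^sup>2) * Re (cinner x (C x))"
  proof (intro mult_right_mono mult_left_mono power_mono)
    show "norm w \<le> M * norm x" unfolding w_def by (rule M)
    show "0 \<le> M" by fact
    show "0 \<le> Re (cinner x (C x))" using P by (simp add: positive_op_def)
  qed simp
  finally show ?thesis by (simp add: w_def power2_eq_square power3_eq_cube ac_simps)
qed

lemma Cauchy_if_dist_power_bound: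
  fixes X :: "nat \<Rightarrow> 'a::metric_space" and a :: "nat \<Rightarrow> real"
  assumes "Cauchy a" "K > 0" "p > 0"
    and bound: "\<And>m n. (dist (X m) (X n))^p \<le> K * dist (a m) (a n)"
  shows "Cauchy X"
proof (rule metric_CauchyI)
  fix e :: real
  assume "e > 0"
  then obtain M where M: "\<forall>m\<ge>M. \<forall>n\<ge>M. dist (a m) (a n) < e^p / K"
    using \<open>Cauchy a\<close> \<open>K > 0\<close> unfolding Cauchy_def by (meson divide_pos_pos zero_less_power)
  have "dist (X m) (X n) < e" if "M \<le> m" "M \<le> n" for m n
  proof -
    have "(dist (X m) (X n))^p < e^p"
      using bound[of m n] M that \<open>K > 0\<close> by (smt (verit) mult.commute pos_less_divide_eq)
    then show ?thesis by (rule power_less_imp_less_base) (use \<open>e > 0\<close> in simp)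
  qed
  then show "\<exists>M. \<forall>m\<ge>M. \<forall>n\<ge>M. dist (X m) (X n) < e" by blast
qed

locale positive_contraction =
  fixes B :: "'a::chilbert_space \<Rightarrow> 'a"
  assumes positive: "positive_op B" and contractive: "norm (B x) \<le> norm x"
begin

lemma bounded_clinear: "bounded_clinear B"
  using positive by (simp add: positive_op_def)

lemma self_adjoint: "cinner x (B y) = cinner (B x) y"
  by (rule positive_op_self_adjoint[OF positive])

lemma positive_op_ident_minus: "positive_op (\<lambda>x. x - B x)"
proof (rule positive_opI)
  show "bounded_clinear (\<lambda>x. x - B x)"
    by (rule bounded_clinear_diff[OF bounded_clinear_ident bounded_clinear])
  show "cinner x (y - B y) = cinner (x - B x) y" for x y
    by (simp add: cinner_diff_left cinner_diff_right self_adjoint)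
  show "Re (cinner x (x - B x)) \<ge> 0" for x
    using Re_cinner_le_if_contractive[of B x, OF contractive]
    by (simp add: cinner_diff_right Re_cinner_self)
qed

lemma bounded_clinear_power: "bounded_clinear (B ^^ k)"
proof (induction k)
  case 0
  then show ?case using bounded_clinear_ident by (simp add: id_def)
next
  case (Suc k)
  then show ?case
    using bounded_clinear_compose[OF bounded_clinear Suc] by (simp add: comp_def)
qed

lemma power_self_adjoint: "cinner x ((B ^^ k) y) = cinner ((B ^^ k) x) y"
proof (induction k arbitrary: x y)
  case (Suc k)
  have "cinner x ((B ^^ Suc k) y) = cinner ((B ^^ k) (B x)) y"
    by (simp add: self_adjoint Suc)
  then show ?case by (simp add: funpow_swap1)
qed simp

lemma power_nonneg: "Re (cinner x ((B ^^ k) x)) \<ge> 0"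
proof (cases "even k")
  case True
  then obtain j where "k = j + j" by (metis evenE mult_2)
  then have "cinner x ((B ^^ k) x) = cinner ((B ^^ j) x) ((B ^^ j) x)"
    by (simp add: funpow_add power_self_adjoint)
  then show ?thesis by (simp add: Re_cinner_self)
next
  case False
  then obtain j where "k = Suc (j + j)" by (metis oddE mult_2 Suc_eq_plus1)
  then have "cinner x ((B ^^ k) x) = cinner ((B ^^ j) x) (B ((B ^^ j) x))"
    by (simp add: funpow_add funpow_swap1 power_self_adjoint)
  then show ?thesis using positive by (simp add: positive_op_def)
qed

lemma power_commute:
  assumes "\<And>x. C (B x) = B (C x)"
  shows "C ((B ^^ k) x) = (B ^^ k) (C x)"
  by (induction k) (simp_all add: assms)

inductive_set nonneg_polys :: "('a \<Rightarrow> 'a) set" where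
  zero: "(\<lambda>x. 0) \<in> nonneg_polys"
| add_monomial: "X \<in> nonneg_polys \<Longrightarrow> c \<ge> 0 \<Longrightarrow> (\<lambda>x. X x + c *\<^sub>R (B ^^ k) x) \<in> nonneg_polys"

lemma nonneg_polys_bounded_clinear: "X \<in> nonneg_polys \<Longrightarrow> bounded_clinear X"
  by (induction rule: nonneg_polys.induct)
    (simp_all add: bounded_clinear_zero bounded_clinear_add bounded_clinear_const_scaleR
      bounded_clinear_power)

lemma nonneg_polys_positive_op: "X \<in> nonneg_polys \<Longrightarrow> positive_op X"
proof (rule positive_opI)
  show "bounded_clinear X" if "X \<in> nonneg_polys"
    using that by (rule nonneg_polys_bounded_clinear)
  show "cinner x (X y) = cinner (X x) y" if "X \<in> nonneg_polys" for x y
    using that by (induction arbitrary: x y rule: nonneg_polys.induct)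
      (simp_all add: cinner_simps power_self_adjoint)
  show "Re (cinner x (X x)) \<ge> 0" if "X \<in> nonneg_polys" for x
    using that by (induction rule: nonneg_polys.induct)
      (simp_all add: cinner_add_right cinner_scaleR_right power_nonneg)
qed

lemma nonneg_polys_commute:
  assumes "X \<in> nonneg_polys" and C: "bounded_clinear C" and "\<And>x. C (B x) = B (C x)"
  shows "C (X x) = X (C x)"
  using assms(1)
  by (induction rule: nonneg_polys.induct)
    (simp_all add: clinear_zero[OF C] clinear_add[OF C] clinear_scaleR[OF C] power_commute assms(3))

lemma nonneg_polys_add:
  assumes "X \<in> nonneg_polys" "Y \<in> nonneg_polys"
  shows "(\<lambda>x. X x + Y x) \<in> nonneg_polys"
  using assms(2)
proof (induction Y rule: nonneg_polys.induct)
  case (add_monomial Y c k)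
  have "(\<lambda>x. (X x + Y x) + c *\<^sub>R (B ^^ k) x) \<in> nonneg_polys"
    by (rule nonneg_polys.add_monomial[OF add_monomial.IH add_monomial.hyps(2)])
  then show ?case by (simp add: add.assoc)
qed (use assms(1) in simp)

lemma nonneg_polys_scaleR: "X \<in> nonneg_polys \<Longrightarrow> r \<ge> 0 \<Longrightarrow> (\<lambda>x. r *\<^sub>R X x) \<in> nonneg_polys"
proof (induction X rule: nonneg_polys.induct)
  case (add_monomial X c k)
  have "(\<lambda>x. r *\<^sub>R X x + (r * c) *\<^sub>R (B ^^ k) x) \<in> nonneg_polys"
    using add_monomial by (intro nonneg_polys.add_monomial) simp_all
  then show ?case by (simp add: scaleR_add_right)
qed (simp add: nonneg_polys.zero)

lemma nonneg_polys_compose_power: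
  "X \<in> nonneg_polys \<Longrightarrow> (\<lambda>x. X ((B ^^ j) x)) \<in> nonneg_polys"
proof (induction X rule: nonneg_polys.induct)
  case (add_monomial X c k)
  have "(\<lambda>x. X ((B ^^ j) x) + c *\<^sub>R (B ^^ (k + j)) x) \<in> nonneg_polys"
    using add_monomial by (intro nonneg_polys.add_monomial)
  then show ?case by (simp add: funpow_add)
qed (simp add: nonneg_polys.zero)

lemma nonneg_polys_compose:
  assumes X: "X \<in> nonneg_polys" and "Y \<in> nonneg_polys"
  shows "(\<lambda>x. X (Y x)) \<in> nonneg_polys"
  using assms(2)
proof (induction Y rule: nonneg_polys.induct)
  case zero
  then show ?case
    using nonneg_polys.zero by (simp add: clinear_zero[OF nonneg_polys_bounded_clinear[OF X]])
next
  case (add_monomial Y c k)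
  have "(\<lambda>x. X (Y x) + c *\<^sub>R X ((B ^^ k) x)) \<in> nonneg_polys"
    by (rule nonneg_polys_add[OF add_monomial.IH
          nonneg_polys_scaleR[OF nonneg_polys_compose_power[OF X] add_monomial.hyps(2)]])
  then show ?case
    using nonneg_polys_bounded_clinear[OF X] by (simp add: clinear_add clinear_scaleR)
qed

lemma op_in_nonneg_polys: "B \<in> nonneg_polys"
  using nonneg_polys.add_monomial[OF nonneg_polys.zero, of 1 1] by simp

text \<open>If \<open>Y = (B + Y\<^sup>2) / 2\<close>, then \<open>(I - Y)\<^sup>2 = I - B\<close>. The iteration below increases from
  \<open>0\<close> to such a \<open>Y\<close>.\<close>

primrec sqrt_iter :: "nat \<Rightarrow> 'a \<Rightarrow> 'a" where
  "sqrt_iter 0 = (\<lambda>x. 0)"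
| "sqrt_iter (Suc n) = (\<lambda>x. (1/2::real) *\<^sub>R (B x + sqrt_iter n (sqrt_iter n x)))"

lemma sqrt_iter_nonneg_polys: "sqrt_iter n \<in> nonneg_polys"
proof (induction n)
  case 0
  then show ?case using nonneg_polys.zero by simp
next
  case (Suc n)
  have "(\<lambda>x. (1/2::real) *\<^sub>R B x + (1/2::real) *\<^sub>R sqrt_iter n (sqrt_iter n x)) \<in> nonneg_polys"
    by (rule nonneg_polys_add[OF nonneg_polys_scaleR[OF op_in_nonneg_polys]
          nonneg_polys_scaleR[OF nonneg_polys_compose[OF Suc Suc]]]) simp_all
  then show ?case by (simp add: scaleR_add_right)
qed

lemma bounded_clinear_sqrt_iter: "bounded_clinear (sqrt_iter n)"
  by (rule nonneg_polys_bounded_clinear[OF sqrt_iter_nonneg_polys])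

lemma sqrt_iter_commute:
  "bounded_clinear C \<Longrightarrow> (\<And>x. C (B x) = B (C x)) \<Longrightarrow> C (sqrt_iter n x) = sqrt_iter n (C x)"
  by (rule nonneg_polys_commute[OF sqrt_iter_nonneg_polys])

text \<open>\<open>Y\<^sub>n\<^sub>+\<^sub>2 - Y\<^sub>n\<^sub>+\<^sub>1 = (Y\<^sub>n\<^sub>+\<^sub>1 - Y\<^sub>n) (Y\<^sub>n\<^sub>+\<^sub>1 + Y\<^sub>n) / 2\<close>, since the \<open>Y\<^sub>n\<close> commute.\<close>

lemma sqrt_iter_step_nonneg_polys:
  "(\<lambda>x. sqrt_iter (Suc n) x - sqrt_iter n x) \<in> nonneg_polys"
proof (induction n)
  case 0
  have "(\<lambda>x. (1/2::real) *\<^sub>R B x) \<in> nonneg_polys"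
    by (rule nonneg_polys_scaleR[OF op_in_nonneg_polys]) simp
  then show ?case by simp
next
  case (Suc n)
  let ?Y1 = "sqrt_iter (Suc n)" and ?Y0 = "sqrt_iter n"
  have B_commute: "B (sqrt_iter m x) = sqrt_iter m (B x)" for m x
    by (rule sqrt_iter_commute[OF bounded_clinear]) simp
  have "?Y1 (?Y0 x) = ?Y0 (?Y1 x)" for x
    by (rule sqrt_iter_commute[OF bounded_clinear_sqrt_iter]) (rule B_commute[symmetric])
  then have "?Y1 (?Y1 x + ?Y0 x) - ?Y0 (?Y1 x + ?Y0 x) = ?Y1 (?Y1 x) - ?Y0 (?Y0 x)" for x
    by (simp del: sqrt_iter.simps add: clinear_add[OF bounded_clinear_sqrt_iter] algebra_simps)
  moreover have "sqrt_iter (Suc (Suc n)) x - ?Y1 x = (1/2::real) *\<^sub>R (?Y1 (?Y1 x) - ?Y0 (?Y0 x))" for x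
    by (simp only: sqrt_iter.simps(2)) (simp add: algebra_simps)
  ultimately have "sqrt_iter (Suc (Suc n)) x - ?Y1 x
      = (1/2::real) *\<^sub>R (?Y1 (?Y1 x + ?Y0 x) - ?Y0 (?Y1 x + ?Y0 x))" for x
    by (simp del: sqrt_iter.simps)
  moreover have "(\<lambda>x. (1/2::real) *\<^sub>R (?Y1 (?Y1 x + ?Y0 x) - ?Y0 (?Y1 x + ?Y0 x))) \<in> nonneg_polys"
    by (rule nonneg_polys_scaleR[OF nonneg_polys_compose[OF Suc
          nonneg_polys_add[OF sqrt_iter_nonneg_polys sqrt_iter_nonneg_polys]]]) simp
  ultimately show ?case by (simp del: sqrt_iter.simps)
qed

lemma sqrt_iter_mono_nonneg_polys:
  "n \<le> m \<Longrightarrow> (\<lambda>x. sqrt_iter m x - sqrt_iter n x) \<in> nonneg_polys"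
proof (induction m rule: dec_induct)
  case base
  then show ?case using nonneg_polys.zero by simp
next
  case (step m)
  have "(\<lambda>x. (sqrt_iter (Suc m) x - sqrt_iter m x) + (sqrt_iter m x - sqrt_iter n x)) \<in> nonneg_polys"
    by (rule nonneg_polys_add[OF sqrt_iter_step_nonneg_polys step.IH])
  then show ?case by (simp del: sqrt_iter.simps)
qed

lemma norm_sqrt_iter_le: "norm (sqrt_iter n x) \<le> norm x"
proof (induction n arbitrary: x)
  case (Suc n)
  have "norm (sqrt_iter (Suc n) x) \<le> (1/2) * (norm (B x) + norm (sqrt_iter n (sqrt_iter n x)))"
    by (simp add: norm_triangle_ineq)
  also have "\<dots> \<le> (1/2) * (norm x + norm x)"
    using contractive[of x] Suc[of "sqrt_iter n x"] Suc[of x] by simp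
  finally show ?case by simp
qed simp

lemma dist_sqrt_iter_power4_le:
  assumes "n \<le> m"
  shows "(dist (sqrt_iter m x) (sqrt_iter n x))^4
    \<le> 8 * (norm x)\<^sup>2 * (Re (cinner x (sqrt_iter m x)) - Re (cinner x (sqrt_iter n x)))"
proof -
  define C where "C = (\<lambda>z. sqrt_iter m z - sqrt_iter n z)"
  have P: "positive_op C"
    unfolding C_def by (rule nonneg_polys_positive_op[OF sqrt_iter_mono_nonneg_polys[OF assms]])
  have "norm (C z) \<le> 2 * norm z" for z
    using norm_triangle_ineq4[of "sqrt_iter m z" "sqrt_iter n z"]
      norm_sqrt_iter_le[of m z] norm_sqrt_iter_le[of n z]
    unfolding C_def by linarith
  from norm_positive_op_power4_le[OF P this, of x]
  show ?thesis by (simp add: C_def dist_norm cinner_diff_right)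
qed

lemma Cauchy_sqrt_iter: "Cauchy (\<lambda>n. sqrt_iter n x)"
proof -
  define a where "a n = Re (cinner x (sqrt_iter n x))" for n
  have a_mono: "a n \<le> a m" if "n \<le> m" for m n
    using nonneg_polys_positive_op[OF sqrt_iter_mono_nonneg_polys[OF that]]
    by (simp add: a_def positive_op_def cinner_diff_right)
  then have "incseq a" by (rule monoI)
  moreover have "a n \<le> (norm x)\<^sup>2" for n
    unfolding a_def by (rule Re_cinner_le_if_contractive) (rule norm_sqrt_iter_le)
  then have "bdd_above (range a)" by (intro bdd_aboveI) auto
  ultimately have "Cauchy a"
    using LIMSEQ_incseq_SUP LIMSEQ_imp_Cauchy by blast
  have bound: "(dist (sqrt_iter m x) (sqrt_iter n x))^4 \<le> 8 * (norm x)\<^sup>2 * dist (a m) (a n)" for m n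
  proof (cases "n \<le> m")
    case True
    then show ?thesis
      using dist_sqrt_iter_power4_le[OF True, of x] a_mono[OF True]
      by (simp add: a_def dist_real_def)
  next
    case False
    then show ?thesis
      using dist_sqrt_iter_power4_le[of m n x] a_mono[of m n]
      by (simp add: a_def dist_real_def dist_commute)
  qed
  show ?thesis
  proof (rule Cauchy_if_dist_power_bound[OF \<open>Cauchy a\<close>])
    show "(dist (sqrt_iter m x) (sqrt_iter n x))^4 \<le> (8 * (norm x)\<^sup>2 + 1) * dist (a m) (a n)" for m n
      by (rule order_trans[OF bound]) (simp add: distrib_right)
  qed (simp_all add: add_nonneg_pos)
qed

definition sqrt_iter_lim :: "'a \<Rightarrow> 'a" where
  "sqrt_iter_lim x = lim (\<lambda>n. sqrt_iter n x)"

lemma sqrt_iter_tendsto: "(\<lambda>n. sqrt_iter n x) \<longlonglongrightarrow> sqrt_iter_lim x"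
  unfolding sqrt_iter_lim_def
  using Cauchy_sqrt_iter Cauchy_convergent_iff convergent_LIMSEQ_iff by blast

lemma norm_sqrt_iter_lim_le: "norm (sqrt_iter_lim x) \<le> norm x"
  using LIMSEQ_le_const2[OF tendsto_norm[OF sqrt_iter_tendsto]] norm_sqrt_iter_le by simp

lemma bounded_clinear_sqrt_iter_lim: "bounded_clinear sqrt_iter_lim"
proof (rule bounded_clinearI[where K=1])
  fix x y :: 'a and c :: complex
  have "(\<lambda>n. sqrt_iter n (x + y)) \<longlonglongrightarrow> sqrt_iter_lim x + sqrt_iter_lim y"
    using tendsto_add[OF sqrt_iter_tendsto sqrt_iter_tendsto]
    by (simp only: clinear_add[OF bounded_clinear_sqrt_iter])
  then show "sqrt_iter_lim (x + y) = sqrt_iter_lim x + sqrt_iter_lim y"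
    by (rule LIMSEQ_unique[OF sqrt_iter_tendsto])
  have "(\<lambda>n. sqrt_iter n (c *\<^sub>C x)) \<longlonglongrightarrow> c *\<^sub>C sqrt_iter_lim x"
    using bounded_linear.tendsto[OF bounded_linear_scaleC sqrt_iter_tendsto]
    by (simp only: clinear_scaleC[OF bounded_clinear_sqrt_iter])
  then show "sqrt_iter_lim (c *\<^sub>C x) = c *\<^sub>C sqrt_iter_lim x"
    by (rule LIMSEQ_unique[OF sqrt_iter_tendsto])
  show "norm (sqrt_iter_lim x) \<le> norm x * 1"
    using norm_sqrt_iter_lim_le by simp
qed

lemma sqrt_iter_lim_self_adjoint: "cinner x (sqrt_iter_lim y) = cinner (sqrt_iter_lim x) y"
proof -
  have "(\<lambda>n. cinner x (sqrt_iter n y)) \<longlonglongrightarrow> cinner x (sqrt_iter_lim y)"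
    by (rule bounded_linear.tendsto[OF bounded_linear_cinner_right sqrt_iter_tendsto])
  moreover have "(\<lambda>n. cinner x (sqrt_iter n y)) \<longlonglongrightarrow> cinner (sqrt_iter_lim x) y"
    using bounded_linear.tendsto[OF bounded_linear_cinner_left sqrt_iter_tendsto]
    by (simp add: nonneg_polys_positive_op[OF sqrt_iter_nonneg_polys, THEN positive_op_self_adjoint])
  ultimately show ?thesis by (rule LIMSEQ_unique)
qed

lemma sqrt_iter_lim_fixpoint: "sqrt_iter_lim x = (1/2::real) *\<^sub>R (B x + sqrt_iter_lim (sqrt_iter_lim x))"
proof -
  have "(\<lambda>n. sqrt_iter n (sqrt_iter n x) - sqrt_iter n (sqrt_iter_lim x)) \<longlonglongrightarrow> 0"
  proof (rule Lim_null_comparison)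
    show "\<forall>\<^sub>F n in sequentially. norm (sqrt_iter n (sqrt_iter n x) - sqrt_iter n (sqrt_iter_lim x))
        \<le> norm (sqrt_iter n x - sqrt_iter_lim x)"
      by (simp add: clinear_diff[OF bounded_clinear_sqrt_iter, symmetric] norm_sqrt_iter_le)
    show "(\<lambda>n. norm (sqrt_iter n x - sqrt_iter_lim x)) \<longlonglongrightarrow> 0"
      by (intro tendsto_norm_zero LIM_zero sqrt_iter_tendsto)
  qed
  from Lim_transform[OF sqrt_iter_tendsto this]
  have "(\<lambda>n. sqrt_iter n (sqrt_iter n x)) \<longlonglongrightarrow> sqrt_iter_lim (sqrt_iter_lim x)" .
  then have "(\<lambda>n. sqrt_iter (Suc n) x) \<longlonglongrightarrow> (1/2::real) *\<^sub>R (B x + sqrt_iter_lim (sqrt_iter_lim x))"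
    by (simp add: tendsto_intros)
  moreover have "(\<lambda>n. sqrt_iter (Suc n) x) \<longlonglongrightarrow> sqrt_iter_lim x"
    by (rule LIMSEQ_Suc[OF sqrt_iter_tendsto])
  ultimately show ?thesis using LIMSEQ_unique by metis
qed

lemma sqrt_iter_lim_commute:
  assumes C: "bounded_clinear C" and "\<And>x. C (B x) = B (C x)"
  shows "C (sqrt_iter_lim x) = sqrt_iter_lim (C x)"
proof -
  have "(\<lambda>n. sqrt_iter n (C x)) \<longlonglongrightarrow> C (sqrt_iter_lim x)"
    using bounded_linear.tendsto[OF C[unfolded bounded_clinear_def, THEN conjunct1] sqrt_iter_tendsto]
    by (simp only: sqrt_iter_commute[OF assms])
  from LIMSEQ_unique[OF sqrt_iter_tendsto this] show ?thesis by simp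
qed

lemma positive_op_ident_minus_sqrt_iter_lim: "positive_op (\<lambda>x. x - sqrt_iter_lim x)"
proof (rule positive_opI)
  show "bounded_clinear (\<lambda>x. x - sqrt_iter_lim x)"
    by (rule bounded_clinear_diff[OF bounded_clinear_ident bounded_clinear_sqrt_iter_lim])
  show "cinner x (y - sqrt_iter_lim y) = cinner (x - sqrt_iter_lim x) y" for x y
    by (simp add: cinner_diff_left cinner_diff_right sqrt_iter_lim_self_adjoint)
  show "Re (cinner x (x - sqrt_iter_lim x)) \<ge> 0" for x
    using Re_cinner_le_if_contractive[of sqrt_iter_lim x, OF norm_sqrt_iter_lim_le]
    by (simp add: cinner_diff_right Re_cinner_self)
qed

lemma square_ident_minus_sqrt_iter_lim:
  "(x - sqrt_iter_lim x) - sqrt_iter_lim (x - sqrt_iter_lim x) = x - B x"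
proof -
  have "2 *\<^sub>R sqrt_iter_lim x = B x + sqrt_iter_lim (sqrt_iter_lim x)"
    by (subst sqrt_iter_lim_fixpoint) simp
  then show ?thesis
    by (simp add: clinear_diff[OF bounded_clinear_sqrt_iter_lim] algebra_simps scaleR_2)
qed

text \<open>Any positive square root \<open>S\<close> of \<open>I - B\<close> commutes with \<open>B\<close>, hence with the constructed root,
  so the two coincide.\<close>

lemma ex1_positive_sqrt_ident_minus: "\<exists>!S. positive_op S \<and> S \<circ> S = (\<lambda>x. x - B x)"
proof (rule ex1I[of _ "\<lambda>x. x - sqrt_iter_lim x"])
  show "positive_op (\<lambda>x. x - sqrt_iter_lim x) \<and>
      (\<lambda>x. x - sqrt_iter_lim x) \<circ> (\<lambda>x. x - sqrt_iter_lim x) = (\<lambda>x. x - B x)"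
    using positive_op_ident_minus_sqrt_iter_lim square_ident_minus_sqrt_iter_lim by auto
  fix S
  assume "positive_op S \<and> S \<circ> S = (\<lambda>x. x - B x)"
  then have P: "positive_op S" and SS: "\<And>x. S (S x) = x - B x"
    by (auto dest: fun_cong)
  have S: "bounded_clinear S"
    using P by (simp add: positive_op_def)
  have "S (B x) = B (S x)" for x
    using SS[of "S x"] arg_cong[OF SS[of x], of S] by (simp add: clinear_diff[OF S])
  then have "S (x - sqrt_iter_lim x) = S x - sqrt_iter_lim (S x)" for x
    by (simp add: clinear_diff[OF S] sqrt_iter_lim_commute[OF S])
  moreover have "S (S x) = (x - sqrt_iter_lim x) - sqrt_iter_lim (x - sqrt_iter_lim x)" for x
    by (simp add: SS square_ident_minus_sqrt_iter_lim)
  ultimately show "S = (\<lambda>x. x - sqrt_iter_lim x)"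
    by (intro positive_op_eq_if_squares_eq[OF P positive_op_ident_minus_sqrt_iter_lim]) simp_all
qed

lemma positive_op_sqrt_ident_minus: "positive_op (op_sqrt (\<lambda>x. x - B x))"
  using theI'[OF ex1_positive_sqrt_ident_minus] by (simp add: op_sqrt_def)

lemma op_sqrt_ident_minus_square: "op_sqrt (\<lambda>x. x - B x) (op_sqrt (\<lambda>x. x - B x) x) = x - B x"
  using theI'[OF ex1_positive_sqrt_ident_minus] by (simp add: op_sqrt_def fun_eq_iff)

end

section \<open>Contractions with a rank-one defect operator\<close>

lemma hyponormalI:
  fixes T :: "'a::chilbert_space \<Rightarrow> 'a"
  assumes T: "bounded_clinear T" and le: "\<And>x. norm (adj T x) \<le> norm (T x)"
  shows "hyponormal T"
  unfolding hyponormal_def op_le_def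
proof (rule positive_opI)
  have T': "bounded_clinear (adj T)" by (rule bounded_clinear_adj[OF T])
  show "bounded_clinear (\<lambda>x. adj T (T x) - T (adj T x))"
    by (rule bounded_clinear_diff[OF bounded_clinear_compose[OF T' T] bounded_clinear_compose[OF T T']])
  have form: "cinner x (adj T (T y) - T (adj T y)) = cinner (T x) (T y) - cinner (adj T x) (adj T y)"
    for x y
    using cinner_adj_right[OF T, of x "T y"] cinner_adj_left[OF T, of x "adj T y"]
    by (simp only: cinner_diff_right)
  show "cinner x (adj T (T y) - T (adj T y)) = cinner (adj T (T x) - T (adj T x)) y" for x y
    using cinner_adj_left[OF T, of "T x" y] cinner_adj_right[OF T, of "adj T x" y]
    by (simp only: form cinner_diff_left)
  show "Re (cinner x (adj T (T x) - T (adj T x))) \<ge> 0" for x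
    using le[of x] by (simp add: form Re_cinner_self power_mono)
qed

lemma positive_op_rank_one:
  fixes A :: "'a::complex_inner \<Rightarrow> 'a"
  assumes P: "positive_op A" and "norm u = 1" and range: "\<And>x. \<exists>c. A x = c *\<^sub>C u"
  shows "A x = Re (cinner u (A u)) *\<^sub>R (cinner u x *\<^sub>C u)"
proof -
  have uu: "cinner u u = 1"
    using \<open>norm u = 1\<close> by (simp add: cinner_self)
  have A_eq: "A y = cinner u (A y) *\<^sub>C u" for y
    using range[of y] uu by (auto simp: cinner_scaleC_right)
  have real: "cnj (cinner u (A u)) = of_real (Re (cinner u (A u)))"
    using P by (simp add: positive_op_def complex_eq_iff)
  have "cinner u (A x) = cinner (A u) x"
    by (rule positive_op_self_adjoint[OF P])
  also have "\<dots> = cnj (cinner u (A u)) * cinner u x"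
    by (subst A_eq) (simp only: cinner_scaleC_left)
  finally have "cinner u (A x) = of_real (Re (cinner u (A u))) * cinner u x"
    unfolding real .
  then show ?thesis
    by (subst A_eq) (simp add: scaleR_scaleC scaleC_scaleC)
qed

locale rank_one_defect =
  fixes T :: "'a::chilbert_space \<Rightarrow> 'a" and u :: 'a and a :: real
  assumes bounded_clinear: "bounded_clinear T" and norm_u: "norm u = 1" and nonneg: "a \<ge> 0"
    and defect: "\<And>x. x - adj T (T x) = a *\<^sub>R (cinner u x *\<^sub>C u)"
begin

definition defect_adj :: "'a \<Rightarrow> 'a" where
  "defect_adj x = x - T (adj T x)"

lemma cinner_adj_left: "cinner (adj T x) y = cinner x (T y)"
  by (rule cinner_adj_left[OF bounded_clinear])

lemma cinner_adj_right: "cinner y (adj T x) = cinner (T y) x"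
  by (rule cinner_adj_right[OF bounded_clinear])

lemma cinner_u_u: "cinner u u = 1"
  using norm_u by (simp add: cinner_self)

lemma adj_T_u: "adj T (T u) = (1 - a) *\<^sub>R u"
  using defect[of u] by (simp add: cinner_u_u algebra_simps)

lemma norm_T_u_square: "(norm (T u))\<^sup>2 = 1 - a"
proof -
  have "(norm (T u))\<^sup>2 = Re (cinner u (adj T (T u)))"
    by (simp add: cinner_adj_right Re_cinner_self)
  then show ?thesis by (simp add: adj_T_u cinner_scaleR_right cinner_u_u)
qed

lemma bounded_clinear_adj_T: "bounded_clinear (adj T)"
  by (rule bounded_clinear_adj[OF bounded_clinear])

lemma defect_adj_T_u: "defect_adj (T u) = a *\<^sub>R T u"
  unfolding defect_adj_def adj_T_u clinear_scaleR[OF bounded_clinear]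
  by (simp add: algebra_simps)

lemma defect_adj_square:
  "defect_adj (defect_adj x) = defect_adj x - (a * cinner (T u) x) *\<^sub>C T u"
proof -
  have "adj T x - adj T (T (adj T x)) = (a * cinner (T u) x) *\<^sub>C u"
    using defect[of "adj T x"] by (simp add: cinner_adj_right scaleR_scaleC scaleC_scaleC)
  then have "T (adj T x) - T (adj T (T (adj T x))) = (a * cinner (T u) x) *\<^sub>C T u"
    by (metis clinear_diff[OF bounded_clinear] clinear_scaleC[OF bounded_clinear])
  then show ?thesis
    unfolding defect_adj_def clinear_diff[OF bounded_clinear_adj_T] clinear_diff[OF bounded_clinear]
    by (simp add: algebra_simps)
qed

lemma defect_adj_self_adjoint: "cinner (defect_adj y) z = cinner y (defect_adj z)"
  by (simp add: defect_adj_def cinner_diff_left cinner_diff_right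
      cinner_adj_left[symmetric] cinner_adj_right[symmetric])

lemma Re_cinner_defect_adj: "Re (cinner x (defect_adj x)) = (norm x)\<^sup>2 - (norm (adj T x))\<^sup>2"
  by (simp add: defect_adj_def cinner_diff_right cinner_adj_left[symmetric] Re_cinner_self)

lemma bounded_clinear_defect_adj: "bounded_clinear defect_adj"
  unfolding defect_adj_def
  by (rule bounded_clinear_diff[OF bounded_clinear_ident
        bounded_clinear_compose[OF bounded_clinear bounded_clinear_adj_T]])

lemma norm_square_diff_norm_T_square: "(norm x)\<^sup>2 - (norm (T x))\<^sup>2 = a * (cmod (cinner u x))\<^sup>2"
proof -
  have "(norm x)\<^sup>2 - (norm (T x))\<^sup>2 = Re (cinner x (x - adj T (T x)))"
    by (simp add: cinner_diff_right cinner_adj_right Re_cinner_self)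
  also have "cinner x (x - adj T (T x)) = of_real a * (cinner u x * cnj (cinner u x))"
    unfolding defect by (simp add: cinner_scaleR_right cinner_scaleC_right cinner_commute[of x u])
  finally show ?thesis by (simp add: mult_cnj_self)
qed

lemma cinner_T_u_defect_adj: "cinner (T u) (defect_adj x) = a * cinner (T u) x"
  by (simp add: defect_adj_self_adjoint[symmetric] defect_adj_T_u cinner_scaleR_left)

lemma norm_defect_adj_square:
  "(norm (defect_adj x))\<^sup>2 = Re (cinner x (defect_adj x)) - a * (cmod (cinner (T u) x))\<^sup>2"
proof -
  have "(norm (defect_adj x))\<^sup>2 = Re (cinner x (defect_adj (defect_adj x)))"
    by (simp add: Re_cinner_self[symmetric] defect_adj_self_adjoint)
  also have "cinner x (defect_adj (defect_adj x))
      = cinner x (defect_adj x) - of_real a * (cinner (T u) x * cnj (cinner (T u) x))"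
    by (simp add: defect_adj_square cinner_diff_right cinner_scaleC_right cinner_commute[of x "T u"])
  finally show ?thesis by (simp add: mult_cnj_self)
qed

lemma defect_form_bound:
  "a * (cmod (cinner (T u) x))\<^sup>2 \<le> (1 - a) * Re (cinner x (defect_adj x))"
proof -
  have "(cmod (cinner (T u) (defect_adj x)))\<^sup>2 \<le> (norm (T u) * norm (defect_adj x))\<^sup>2"
    using cmod_cinner_le by (intro power_mono) auto
  then have "a\<^sup>2 * (cmod (cinner (T u) x))\<^sup>2
      \<le> (1 - a) * (Re (cinner x (defect_adj x)) - a * (cmod (cinner (T u) x))\<^sup>2)"
    using nonneg
    by (simp add: cinner_T_u_defect_adj norm_mult power_mult_distrib norm_T_u_square
        norm_defect_adj_square)
  then show ?thesis by (simp add: algebra_simps power2_eq_square)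
qed

lemma norm_defect_adj_add_square:
  "(norm (defect_adj x + cinner (T u) x *\<^sub>C T u))\<^sup>2
    = Re (cinner x (defect_adj x)) + (cmod (cinner (T u) x))\<^sup>2"
proof -
  define \<xi> where "\<xi> = cinner (T u) x"
  have "cinner (defect_adj x) (\<xi> *\<^sub>C T u) = \<xi> * cnj (of_real a * \<xi>)"
    by (metis cinner_T_u_defect_adj cinner_commute cinner_scaleC_right \<xi>_def)
  also have "\<dots> = of_real (a * (cmod \<xi>)\<^sup>2)"
    by (simp add: mult_cnj_self mult.left_commute)
  finally have "Re (cinner (defect_adj x) (\<xi> *\<^sub>C T u)) = a * (cmod \<xi>)\<^sup>2"
    by simp
  moreover have "(norm (\<xi> *\<^sub>C T u))\<^sup>2 = (cmod \<xi>)\<^sup>2 * (1 - a)"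
    by (simp add: norm_scaleC power_mult_distrib norm_T_u_square)
  ultimately show ?thesis
    unfolding norm_add_square norm_defect_adj_square \<xi>_def[symmetric] by (simp add: algebra_simps)
qed

lemma defect_adj_remainder: "defect_adj (x - defect_adj x - cinner (T u) x *\<^sub>C T u) = 0"
  by (simp add: clinear_diff[OF bounded_clinear_defect_adj] clinear_scaleC[OF bounded_clinear_defect_adj]
      defect_adj_square defect_adj_T_u scaleR_scaleC scaleC_scaleC mult.commute)

text \<open>With \<open>E = defect_adj\<close> and \<open>v = T u\<close>, decompose \<open>x = (E x + \<langle>v, x\<rangle> v) + p\<close> with
  \<open>E p = 0\<close>; then
  \<open>a |\<langle>u, x\<rangle>|\<^sup>2 \<le> a \<parallel>E x + \<langle>v, x\<rangle> v\<parallel>\<^sup>2 \<le> \<langle>E x, x\<rangle>\<close>, i.e. \<open>I - T\<^sup>*T \<le> I - T T\<^sup>*\<close>.\<close>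

lemma norm_adj_le_norm_T:
  assumes orthogonal: "\<And>p. T (adj T p) = p \<Longrightarrow> cinner u p = 0"
  shows "norm (adj T x) \<le> norm (T x)"
proof -
  define r where "r = defect_adj x + cinner (T u) x *\<^sub>C T u"
  have "cinner u (x - r) = 0"
    using defect_adj_remainder[of x] by (intro orthogonal) (simp add: r_def defect_adj_def algebra_simps)
  then have "cinner u x = cinner u r"
    by (simp add: cinner_diff_right)
  then have "(cmod (cinner u x))\<^sup>2 \<le> (norm r)\<^sup>2"
    using cmod_cinner_le[of u r] norm_u by (simp add: power_mono)
  then have "a * (cmod (cinner u x))\<^sup>2 \<le> a * (Re (cinner x (defect_adj x)) + (cmod (cinner (T u) x))\<^sup>2)"
    using nonneg by (simp add: r_def norm_defect_adj_add_square mult_left_mono)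
  also have "\<dots> \<le> Re (cinner x (defect_adj x))"
    using defect_form_bound[of x] by (simp add: algebra_simps)
  finally have "(norm (adj T x))\<^sup>2 \<le> (norm (T x))\<^sup>2"
    using norm_square_diff_norm_T_square[of x] unfolding Re_cinner_defect_adj by linarith
  then show ?thesis by (rule power2_le_imp_le) simp
qed

end

section \<open>Defect spaces\<close>

lemma cspan_eq_span: "cspan B = cvs.span B"
  unfolding cspan_def cvs.span_explicit by blast

lemma csubspace_range:
  assumes R: "bounded_clinear R"
  shows "cvs.subspace (range R)"
  unfolding cvs.subspace_def
proof (intro conjI ballI allI)
  show "0 \<in> range R"
    using clinear_zero[OF R] by (metis rangeI)
  show "x + y \<in> range R" if "x \<in> range R" "y \<in> range R" for x y
    using that by (auto simp: clinear_add[OF R, symmetric])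
  show "c *\<^sub>C x \<in> range R" if "x \<in> range R" for c x
    using that by (auto simp: clinear_scaleC[OF R, symmetric])
qed

lemma csubspace_closure:
  fixes S :: "'a::complex_inner set"
  assumes S: "cvs.subspace S"
  shows "cvs.subspace (closure S)"
  unfolding cvs.subspace_def
proof (intro conjI ballI allI)
  show "0 \<in> closure S"
    using S closure_subset unfolding cvs.subspace_def by blast
  fix x y
  assume "x \<in> closure S" "y \<in> closure S"
  then obtain f g where "\<And>n. f n \<in> S" "f \<longlonglongrightarrow> x" "\<And>n. g n \<in> S" "g \<longlonglongrightarrow> y"
    unfolding closure_sequential by blast
  then show "x + y \<in> closure S"
    using S unfolding closure_sequential cvs.subspace_def
    by (intro exI[of _ "\<lambda>n. f n + g n"]) (auto intro: tendsto_add)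
next
  fix c and x :: 'a
  assume "x \<in> closure S"
  then obtain f where "\<And>n. f n \<in> S" "f \<longlonglongrightarrow> x"
    unfolding closure_sequential by blast
  then show "c *\<^sub>C x \<in> closure S"
    using S bounded_linear.tendsto[OF bounded_linear_scaleC] unfolding closure_sequential cvs.subspace_def
    by (intro exI[of _ "\<lambda>n. c *\<^sub>C f n"]) auto
qed

lemma cfinite_dim_spanning_subset:
  assumes "cvs.subspace V" "cfinite_dim V"
  obtains B where "finite B" "B \<subseteq> V" "cspan B = V"
proof -
  obtain B0 where "finite B0" "V \<subseteq> cspan B0"
    using assms(2) unfolding cfinite_dim_def by blast
  obtain B where B: "B \<subseteq> V" "cvs.independent B" "V \<subseteq> cvs.span B"
    by (rule cvs.maximal_independent_subset)
  have "finite B"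
    using cvs.independent_span_bound[OF \<open>finite B0\<close> B(2)] B(1) \<open>V \<subseteq> cspan B0\<close>
    unfolding cspan_eq_span by blast
  moreover have "cspan B = V"
    unfolding cspan_eq_span by (rule cvs.span_subspace[OF B(1) B(3) assms(1)])
  ultimately show ?thesis using B(1) that by blast
qed

lemma range_scaleC_sgn:
  fixes b :: "'a::complex_inner"
  assumes "b \<noteq> 0"
  shows "range (\<lambda>c. c *\<^sub>C sgn b) = range (\<lambda>c. c *\<^sub>C b)"
proof -
  have sgn: "sgn b = (1 / of_real (norm b)) *\<^sub>C b"
    by (simp add: sgn_div_norm scaleR_scaleC divide_inverse)
  have "c *\<^sub>C sgn b = (c / of_real (norm b)) *\<^sub>C b" "c *\<^sub>C b = (c * of_real (norm b)) *\<^sub>C sgn b" for c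
    using assms by (simp_all add: sgn scaleC_scaleC)
  then show ?thesis
    by (intro equalityI subsetI) (metis (mono_tags, lifting) rangeE rangeI)+
qed

text \<open>\<open>cdim\<close> is a \<open>LEAST\<close>, so finite dimensionality is needed for it to mean anything.\<close>

lemma cdim_eq_1E:
  fixes V :: "'a::complex_inner set"
  assumes "cvs.subspace V" "cfinite_dim V" "cdim V = 1"
  obtains u where "norm u = 1" "V = range (\<lambda>c. c *\<^sub>C u)"
proof -
  define spans where "spans n \<longleftrightarrow> (\<exists>B. finite B \<and> card B = n \<and> B \<subseteq> V \<and> cspan B = V)" for n
  have "\<exists>n. spans n"
    using cfinite_dim_spanning_subset[OF assms(1,2)] unfolding spans_def by metis
  moreover have "(LEAST n. spans n) = 1"
    using assms(3) unfolding cdim_def spans_def .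
  ultimately have "spans 1" "\<not> spans 0"
    using LeastI_ex[of spans] Least_le[of spans 0] by auto
  then obtain b where V: "V = range (\<lambda>c. c *\<^sub>C b)"
    unfolding spans_def by (metis card_1_singletonE cspan_eq_span cvs.span_singleton)
  moreover have "b \<noteq> 0"
    using \<open>\<not> spans 0\<close> V unfolding spans_def cspan_eq_span by auto
  ultimately show ?thesis
    using that[of "sgn b"] by (simp add: norm_sgn range_scaleC_sgn)
qed

lemma cinner_closure_range_eq_0:
  fixes S :: "'a::complex_inner \<Rightarrow> 'a"
  assumes P: "positive_op S" and "S (S p) = 0" and "z \<in> closure (range S)"
  shows "cinner z p = 0"
proof -
  have "cinner (S p) (S p) = 0"
    using \<open>S (S p) = 0\<close> positive_op_self_adjoint[OF P, of p "S p"] by simp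
  then have "S p = 0" using cinner_eq_zero_iff by blast
  then have "range S \<subseteq> {z. cinner z p = 0}"
    by (auto simp: positive_op_self_adjoint[OF P, symmetric])
  moreover have "closed {z. cinner z p = 0}"
    by (intro closed_Collect_eq continuous_on_const
        bounded_linear.continuous_on[OF bounded_linear_cinner_left continuous_on_id])
  ultimately show ?thesis
    using closure_minimal \<open>z \<in> closure (range S)\<close> by blast
qed

lemma contraction_adj:
  assumes "contraction (T :: 'a::chilbert_space \<Rightarrow> 'a)"
  shows "contraction (adj T)"
proof -
  have T: "bounded_clinear T" and "\<And>x. norm (T x) \<le> norm x"
    using assms by (auto simp: contraction_def)
  then show ?thesis
    using norm_adj_le[OF T, of 1] by (simp add: contraction_def bounded_clinear_adj)
qed

lemma positive_contraction_adj_comp: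
  assumes "contraction (T :: 'a::chilbert_space \<Rightarrow> 'a)"
  shows "positive_contraction (\<lambda>x. adj T (T x))"
proof
  have T: "bounded_clinear T" and "norm (T x) \<le> norm x" "norm (adj T (T x)) \<le> norm (T x)" for x
    using assms contraction_adj[OF assms] by (auto simp: contraction_def)
  then show "positive_op (\<lambda>x. adj T (T x))" and "norm (adj T (T x)) \<le> norm x" for x
    by (simp add: positive_op_adj_comp, meson order_trans)
qed

lemma positive_contraction_comp_adj:
  assumes "contraction (T :: 'a::chilbert_space \<Rightarrow> 'a)"
  shows "positive_contraction (\<lambda>x. T (adj T x))"
proof
  have T: "bounded_clinear T" and "norm (T (adj T x)) \<le> norm (adj T x)" "norm (adj T x) \<le> norm x" for x
    using assms contraction_adj[OF assms] by (auto simp: contraction_def)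
  then show "positive_op (\<lambda>x. T (adj T x))" and "norm (T (adj T x)) \<le> norm x" for x
    by (simp add: positive_op_comp_adj, meson order_trans)
qed

lemma csubspace_defect_space:
  assumes "contraction (T :: 'a::chilbert_space \<Rightarrow> 'a)"
  shows "cvs.subspace (defect_space T)"
proof -
  interpret positive_contraction "\<lambda>x. adj T (T x)"
    by (rule positive_contraction_adj_comp[OF assms])
  show ?thesis
    using positive_op_sqrt_ident_minus unfolding defect_space_def positive_op_def
    by (intro csubspace_closure csubspace_range) simp
qed

lemma rank_one_defect_if_defect_space_eq_line:
  assumes "contraction (T :: 'a::chilbert_space \<Rightarrow> 'a)" and "norm u = 1"
    and defect_line: "defect_space T = range (\<lambda>c. c *\<^sub>C u)"
  shows "rank_one_defect T u (Re (cinner u (u - adj T (T u))))"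
proof -
  interpret positive_contraction "\<lambda>x. adj T (T x)"
    by (rule positive_contraction_adj_comp[OF assms(1)])
  have "x - adj T (T x) \<in> range (op_sqrt (\<lambda>x. x - adj T (T x)))" for x
    by (rule image_eqI[where f="op_sqrt (\<lambda>x. x - adj T (T x))",
          OF op_sqrt_ident_minus_square[symmetric] UNIV_I])
  then have "x - adj T (T x) \<in> defect_space T" for x
    using closure_subset unfolding defect_space_def by blast
  then have "\<exists>c. x - adj T (T x) = c *\<^sub>C u" for x
    using defect_line by auto
  then have "x - adj T (T x) = Re (cinner u (u - adj T (T u))) *\<^sub>R (cinner u x *\<^sub>C u)" for x
    by (rule positive_op_rank_one[OF positive_op_ident_minus \<open>norm u = 1\<close>])
  moreover have "Re (cinner u (u - adj T (T u))) \<ge> 0"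
    using positive_op_ident_minus by (simp add: positive_op_def)
  moreover have "bounded_clinear T"
    using assms(1) by (simp add: contraction_def)
  ultimately show ?thesis
    using \<open>norm u = 1\<close> by unfold_locales
qed

lemma cinner_defect_space_adj_eq_0:
  assumes "contraction (T :: 'a::chilbert_space \<Rightarrow> 'a)"
    and "u \<in> defect_space_adj T" and "T (adj T p) = p"
  shows "cinner u p = 0"
proof -
  interpret positive_contraction "\<lambda>x. T (adj T x)"
    by (rule positive_contraction_comp_adj[OF assms(1)])
  show ?thesis
  proof (rule cinner_closure_range_eq_0[OF positive_op_sqrt_ident_minus])
    show "op_sqrt (\<lambda>x. x - T (adj T x)) (op_sqrt (\<lambda>x. x - T (adj T x)) p) = 0"
      using assms(3) by (simp add: op_sqrt_ident_minus_square)
    show "u \<in> closure (range (op_sqrt (\<lambda>x. x - T (adj T x))))"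
      using assms(2) unfolding defect_space_adj_def .
  qed
qed

theorem corollary3p7:
  fixes T :: "'h::chilbert_space \<Rightarrow> 'h"
  assumes "contraction T"
    and "completely_non_unitary T"
    and "cfinite_dim (defect_space T)"
    and "cfinite_dim (defect_space_adj T)"
    and "defect_space T \<subseteq> defect_space_adj T"
    and "cdim (defect_space T) = 1"
  shows "hyponormal T"
proof -
  obtain u where "norm u = 1" and defect_line: "defect_space T = range (\<lambda>c. c *\<^sub>C u)"
    using csubspace_defect_space[OF assms(1)] assms(3,6) by (rule cdim_eq_1E)
  then interpret rank_one_defect T u "Re (cinner u (u - adj T (T u)))"
    by (rule rank_one_defect_if_defect_space_eq_line[OF assms(1)])
  have "u \<in> defect_space T"
    unfolding defect_line by (rule image_eqI[of _ _ 1]) simp_all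
  then have "cinner u p = 0" if "T (adj T p) = p" for p
    using assms(5) by (intro cinner_defect_space_adj_eq_0[OF assms(1) _ that]) blast
  then show ?thesis
    by (intro hyponormalI[OF bounded_clinear] norm_adj_le_norm_T)
qed

end
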